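(* Let $h>0$, let $B\subset\mathbb Z^8_h$ be bounded and let $f:\partial B\to\mathbb O$. Then $$C^h_{\partial B}f(y)=\tfrac12\big(f(y)+S^h_{\partial B}f(y)\big)\ \text{ for all } y\in\partial^+B,\qquad C^h_{\partial B}f(y)=\tfrac12\big(-f(y)+S^h_{\partial B}f(y)\big)\ \text{ for all } y\in\partial^-B.$$
   Context: $\mathbb O$ is the real octonion algebra with basis $\mathbf e_0=1,\mathbf e_1,\dots,\mathbf e_7$, where $\mathbf e_i\mathbf e_j=-\delta_{ij}+\sum_k\varepsilon_{ijk}\mathbf e_k$ for $1\le i,j\le 7$, $\varepsilon_{ijk}$ totally antisymmetric with $\varepsilon_{ijk}=1$ for $ijk\in\{123,145,176,246,257,347,365\}$; $\overline{\mathbf e}_0=\mathbf e_0$, $\overline{\mathbf e}_l=-\mathbf e_l$ ($l\ge1$). For $h>0$, $\mathbb Z^8_h=(h\mathbb Z)^8$, $e_0,\dots,e_7$ are the standard unit vectors of $\mathbb R^8$, $\chi_A$ is the indicator of $A$. $\partial_l^{+,h}f(x)=(f(x+he_l)-f(x))/h$, $\partial_l^{-,h}f(x)=(f(x)-f(x-he_l))/h$. $N(x)=\{x,x\pm he_0,\dots,x\pm he_7\}$; $\partial B=\{x:\ N(x)\cap B\neq\emptyset,\ N(x)\cap(\mathbb Z^8_h\setminus B)\neq\emptyset\}$, $\partial^+B=\partial B\cap B$, $\partial^-B=\partial B\setminus B$. For $x\in\partial B$: $\Sigma(x)=\sum_l[(\partial_l^{+,h}\chi_B(x))^2+(\partial_l^{-,h}\chi_B(x))^2]$,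 $s(x)=\frac{h^8}{2}\sqrt{\Sigma(x)}$, $n_l^\pm(x)=-2\partial_l^{\pm,h}\chi_B(x)/\sqrt{\Sigma(x)}$, $\int_{\partial B}g\,dS=\sum_{x\in\partial B}g(x)s(x)$. Fundamental solution: $E^1(x)=\frac{1}{(2\pi)^8}\int_{[-\pi,\pi]^8}\frac{\sum_l\overline{\mathbf e}_l\sin u_l}{\sum_l\sin^2u_l}\sin(\sum_lu_lx_l)\,du$ ($x\in\mathbb Z^8$), $E^h(x)=h^{-7}E^1(x/h)$. Star product: $K^h(x,y)*g(x)=-\frac12\sum_{l=0}^7\big(E^h(he_l-x+y)n_l^-(x)+E^h(-he_l-x+y)n_l^+(x)\big)(\mathbf e_lg(x))$. Operators on $g:\partial B\to\mathbb O$: $C^h_{\partial B}g(y)=\int_{\partial B}K^h(x,y)*g(x)\,dS(x)$ ($y\in\mathbb Z^8_h$), and $S^h_{\partial B}g(y)=2\int_{\partial B}K^h(x,y)*\big(g(x)-g(y)\big)\,dS(x)+g(y)$ ($y\in\partial B$), where in the latter the star product is applied to the function $x\mapsto g(x)-g(y)$. *)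

theory Defs
  imports "HOL-Analysis.Analysis"
begin

text \<open>Octonions are represented as vectors in real^8; component k (k < 8) is the
coefficient of the basis element e_k.\<close>

type_synonym oct = "real ^ 8"

definition ev :: "nat \<Rightarrow> real ^ 8" where
  "ev k = axis (of_nat k :: 8) 1"

definition comp :: "real ^ 8 \<Rightarrow> nat \<Rightarrow> real" where
  "comp x k = x $ (of_nat k :: 8)"

definition oct_triples :: "(nat \<times> nat \<times> nat) list" where
  "oct_triples = [(1,2,3),(1,4,5),(1,7,6),(2,4,6),(2,5,7),(3,4,7),(3,6,5)]"

definition oct_cyc :: "(nat \<times> nat \<times> nat) set" where
  "oct_cyc = (\<Union>(a,b,c)\<in>set oct_triples. {(a,b,c),(b,c,a),(c,a,b)})"

definition oct_eps :: "nat \<Rightarrow> nat \<Rightarrow> nat \<Rightarrow> real" where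
  "oct_eps i j k = (if (i,j,k) \<in> oct_cyc then 1 else if (j,i,k) \<in> oct_cyc then -1 else 0)"

definition ebasis_mult :: "nat \<Rightarrow> nat \<Rightarrow> oct" where
  "ebasis_mult i j =
     (if i = 0 then ev j
      else if j = 0 then ev i
      else if i = j then - ev 0
      else (\<Sum>k\<in>{1..7}. oct_eps i j k *\<^sub>R ev k))"

definition omult :: "oct \<Rightarrow> oct \<Rightarrow> oct" where
  "omult a b = (\<Sum>i<8. \<Sum>j<8. (comp a i * comp b j) *\<^sub>R ebasis_mult i j)"

definition oconj_basis :: "nat \<Rightarrow> oct" where
  "oconj_basis l = (if l = 0 then ev 0 else - ev l)"

definition lattice :: "real \<Rightarrow> (real ^ 8) set" where
  "lattice h = {x. \<forall>i. \<exists>k::int. x $ i = h * of_int k}"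

definition nbhd :: "real \<Rightarrow> real ^ 8 \<Rightarrow> (real ^ 8) set" where
  "nbhd h x = insert x ((\<lambda>l. x + h *\<^sub>R ev l) ` {..<8} \<union> (\<lambda>l. x - h *\<^sub>R ev l) ` {..<8})"

definition bd :: "real \<Rightarrow> (real ^ 8) set \<Rightarrow> (real ^ 8) set" where
  "bd h B = {x \<in> lattice h. nbhd h x \<inter> B \<noteq> {} \<and> nbhd h x \<inter> (lattice h - B) \<noteq> {}}"

definition chi :: "(real ^ 8) set \<Rightarrow> real ^ 8 \<Rightarrow> real" where
  "chi B x = (if x \<in> B then 1 else 0)"

definition dplus :: "real \<Rightarrow> nat \<Rightarrow> (real ^ 8 \<Rightarrow> real) \<Rightarrow> real ^ 8 \<Rightarrow> real" where
  "dplus h l g x = (g (x + h *\<^sub>R ev l) - g x) / h"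

definition dminus :: "real \<Rightarrow> nat \<Rightarrow> (real ^ 8 \<Rightarrow> real) \<Rightarrow> real ^ 8 \<Rightarrow> real" where
  "dminus h l g x = (g x - g (x - h *\<^sub>R ev l)) / h"

definition Sig :: "real \<Rightarrow> (real ^ 8) set \<Rightarrow> real ^ 8 \<Rightarrow> real" where
  "Sig h B x = (\<Sum>l<8. (dplus h l (chi B) x)\<^sup>2 + (dminus h l (chi B) x)\<^sup>2)"

definition sfac :: "real \<Rightarrow> (real ^ 8) set \<Rightarrow> real ^ 8 \<Rightarrow> real" where
  "sfac h B x = h ^ 8 / 2 * sqrt (Sig h B x)"

definition nplus :: "real \<Rightarrow> (real ^ 8) set \<Rightarrow> nat \<Rightarrow> real ^ 8 \<Rightarrow> real" where
  "nplus h B l x = - 2 * dplus h l (chi B) x / sqrt (Sig h B x)"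

definition nminus :: "real \<Rightarrow> (real ^ 8) set \<Rightarrow> nat \<Rightarrow> real ^ 8 \<Rightarrow> real" where
  "nminus h B l x = - 2 * dminus h l (chi B) x / sqrt (Sig h B x)"

definition surf_int :: "real \<Rightarrow> (real ^ 8) set \<Rightarrow> (real ^ 8 \<Rightarrow> oct) \<Rightarrow> oct" where
  "surf_int h B g = (\<Sum>x\<in>bd h B. sfac h B x *\<^sub>R g x)"

definition E1 :: "real ^ 8 \<Rightarrow> oct" where
  "E1 x = (1 / (2 * pi) ^ 8) *\<^sub>R
     integral (cbox (\<chi> i. - pi) (\<chi> i. pi))
       (\<lambda>u. (sin (u \<bullet> x) / (\<Sum>l<8. (sin (comp u l))\<^sup>2)) *\<^sub>R
            (\<Sum>l<8. sin (comp u l) *\<^sub>R oconj_basis l))"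

definition Eh :: "real \<Rightarrow> real ^ 8 \<Rightarrow> oct" where
  "Eh h x = (1 / h ^ 7) *\<^sub>R E1 ((1 / h) *\<^sub>R x)"

definition star :: "real \<Rightarrow> (real ^ 8) set \<Rightarrow> real ^ 8 \<Rightarrow> (real ^ 8 \<Rightarrow> oct) \<Rightarrow> real ^ 8 \<Rightarrow> oct" where
  "star h B y g x = (- (1/2)) *\<^sub>R
     (\<Sum>l<8. omult (nminus h B l x *\<^sub>R Eh h (h *\<^sub>R ev l - x + y)
                    + nplus h B l x *\<^sub>R Eh h (- (h *\<^sub>R ev l) - x + y))
                   (omult (ev l) (g x)))"

definition Cop :: "real \<Rightarrow> (real ^ 8) set \<Rightarrow> (real ^ 8 \<Rightarrow> oct) \<Rightarrow> real ^ 8 \<Rightarrow> oct" where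
  "Cop h B g y = surf_int h B (star h B y g)"

definition Sop :: "real \<Rightarrow> (real ^ 8) set \<Rightarrow> (real ^ 8 \<Rightarrow> oct) \<Rightarrow> real ^ 8 \<Rightarrow> oct" where
  "Sop h B g y = 2 *\<^sub>R surf_int h B (star h B y (\<lambda>x. g x - g y)) + g y"

end

(*
  Since S f (y) = 2 C(f - f y)(y) + f y and C is linear, the theorem reduces to the discrete
  Cauchy formula for constants, C c (y) = chi_B(y) c for every lattice point y.

  The normals n_l^+- are differences of chi_B, so summation by parts turns the boundary sum
  defining C c (y) into a sum over B of the symmetric differences
  E^h(y - b + h e_l) - E^h(y - b - h e_l), multiplied by e_l c.  These sum to zero unless b = y
  because E^1 is a fundamental solution of the symmetric difference Dirac operator: on the
  Fourier side the difference has symbol 2 cos(u.z) sin u_l, the octonion relations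
  conj(e_k)(e_l c) + conj(e_l)(e_k c) = 2 delta_kl c cancel the denominator sum_l sin^2 u_l of
  E^1, and what is left is the integral of cos(u.z) over [-pi, pi]^8, i.e. (2 pi)^8 delta_z0.
*)
theory Submission
  imports Defs
begin

section \<open>The octonion multiplication table\<close>

lemma of_nat_8_eq_Abs: "(of_nat k :: 8) = Abs_bit0 (int k mod 8)"
  using bit0.of_nat_eq[where 'a=4] by simp

lemma of_nat_8_inject: "a < 8 \<Longrightarrow> b < 8 \<Longrightarrow> (of_nat a :: 8) = of_nat b \<longleftrightarrow> a = b"
  by (simp add: of_nat_8_eq_Abs bit0.Abs_bit0_inject)

lemma bij_betw_of_nat_8: "bij_betw (of_nat :: nat \<Rightarrow> 8) {..<8} UNIV"
proof (rule bij_betwI')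
  fix i :: 8
  obtain m where "i = Abs_bit0 m" "m \<in> {0..<8}"
    using bit0.Abs_bit0_cases[where 'a=4, of i] by auto
  then show "\<exists>l\<in>{..<8}. i = of_nat l"
    by (intro bexI[of _ "nat m"]) (auto simp: of_nat_8_eq_Abs)
qed (auto simp: of_nat_8_inject)

lemma sum_UNIV_8: "(\<Sum>i\<in>UNIV. f i) = (\<Sum>l<8. f (of_nat l :: 8))"
  using sum.reindex_bij_betw[OF bij_betw_of_nat_8, of f] by simp

lemma ex_of_nat_8: "\<exists>l<8. (i :: 8) = of_nat l"
  using bij_betw_of_nat_8 by (force simp: bij_betw_def)

lemma comp_add [simp]: "comp (a + b) k = comp a k + comp b k"
  and comp_scaleR [simp]: "comp (r *\<^sub>R a) k = r * comp a k"
  by (simp_all add: comp_def)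

lemma comp_ev: "k < 8 \<Longrightarrow> l < 8 \<Longrightarrow> comp (ev l) k = (if k = l then 1 else 0)"
  by (auto simp: comp_def ev_def axis_def of_nat_8_inject)

lemma inner_ev: "u \<bullet> ev l = comp u l"
  by (simp add: ev_def comp_def inner_axis)

lemma oct_expansion: "x = (\<Sum>j<8. comp x j *\<^sub>R ev j)"
proof -
  have "(\<Sum>j<8. comp x j *\<^sub>R ev j) = (\<Sum>i\<in>UNIV. x $ i *\<^sub>R axis i 1)"
    unfolding comp_def ev_def by (rule sum_UNIV_8[symmetric])
  also have "\<dots> = x"
    by (simp add: vec_eq_iff axis_def if_distrib cong: if_cong)
  finally show ?thesis by simp
qed

text \<open>\<open>oct_sign i j\<close> is the sign in \<open>e\<^sub>i e\<^sub>j = \<plusminus>e\<^sub>x\<^sub>o\<^sub>r \<^sub>i \<^sub>j\<close>.\<close>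
definition oct_sign :: "nat \<Rightarrow> nat \<Rightarrow> real" where
  "oct_sign i j = [[1, 1, 1, 1, 1, 1, 1, 1], [1, -1, 1, -1, 1, -1, -1, 1],
     [1, -1, -1, 1, 1, 1, -1, -1], [1, 1, -1, -1, 1, -1, 1, -1], [1, -1, -1, -1, -1, 1, 1, 1],
     [1, 1, -1, 1, -1, -1, -1, 1], [1, 1, 1, -1, -1, 1, -1, -1], [1, -1, 1, 1, -1, -1, 1, -1]] ! i ! j"

definition conj_sign :: "nat \<Rightarrow> real" where
  "conj_sign k = (if k = 0 then 1 else -1)"

lemma less_8_cases: "(i::nat) < 8 \<Longrightarrow> i = 0 \<or> i = 1 \<or> i = 2 \<or> i = 3 \<or> i = 4 \<or> i = 5 \<or> i = 6 \<or> i = 7"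
  by auto

lemma oct_cyc_eq: "oct_cyc = {(1,2,3),(2,3,1),(3,1,2),(1,4,5),(4,5,1),(5,1,4),(1,7,6),(7,6,1),(6,1,7),
  (2,4,6),(4,6,2),(6,2,4),(2,5,7),(5,7,2),(7,2,5),(3,4,7),(4,7,3),(7,3,4),(3,6,5),(6,5,3),(5,3,6)}"
  by (simp add: oct_cyc_def oct_triples_def insert_commute)

lemma ebasis_mult_eq:
  assumes "i < 8" "j < 8" shows "ebasis_mult i j = oct_sign i j *\<^sub>R ev (xor i j)"
proof -
  have "{1..7::nat} = {1,2,3,4,5,6,7}" by auto
  then have sum_1_7: "(\<Sum>k\<in>{Suc 0..7}. f k) = f 1 + f 2 + f 3 + f 4 + f 5 + f 6 + f 7" for f :: "nat \<Rightarrow> oct"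
    by (simp add: ac_simps)
  show ?thesis
    using less_8_cases[OF assms(1)] less_8_cases[OF assms(2)]
    \<comment> \<open>\<open>simp\<close> evaluates some \<open>xor\<close>s, e.g. \<open>xor 4 7\<close>, to \<open>Suc (Suc (Suc 0))\<close>\<close>
    by (elim disjE) (simp_all add: ebasis_mult_def oct_eps_def oct_cyc_eq oct_sign_def sum_1_7
        numeral_3_eq_3[symmetric])
qed

lemma xor_less_8:
  assumes "i < 8" "j < 8" shows "xor i (j::nat) < 8"
  using less_8_cases[OF assms(1)] less_8_cases[OF assms(2)] by (elim disjE) simp_all

lemma oct_sign_square:
  assumes "k < 8" "j < 8" shows "conj_sign k * oct_sign k j * oct_sign k (xor k j) = 1"
  using less_8_cases[OF assms(1)] less_8_cases[OF assms(2)]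
  by (elim disjE) (simp_all add: oct_sign_def conj_sign_def)

lemma oct_sign_anticomm:
  assumes "k < 8" "l < 8" "j < 8" "k \<noteq> l"
  shows "conj_sign k * oct_sign l j * oct_sign k (xor l j) + conj_sign l * oct_sign k j * oct_sign l (xor k j) = 0"
  using less_8_cases[OF assms(1)] less_8_cases[OF assms(2)] less_8_cases[OF assms(3)] assms(4)
  by (elim disjE) (simp_all add: oct_sign_def conj_sign_def)

lemma bilinear_omult: "bilinear omult"
  unfolding bilinear_def
  by (auto intro!: linearI simp: omult_def algebra_simps sum.distrib scaleR_sum_right)

interpretation omult: bounded_bilinear omult
  using bilinear_omult bilinear_conv_bounded_bilinear by blast

lemma omult_ev_ev:
  assumes "i < 8" "j < 8" shows "omult (ev i) (ev j) = ebasis_mult i j"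
proof -
  have "omult (ev i) (ev j) = (\<Sum>a<8. if a = i then (\<Sum>b<8. if b = j then ebasis_mult a b else 0) else 0)"
    unfolding omult_def using assms by (intro sum.cong refl)
       (auto simp: comp_ev if_distrib[where f="\<lambda>r. r *\<^sub>R _"] cong: if_cong)
  then show ?thesis
    using assms by simp
qed

lemma oconj_basis_eq: "oconj_basis k = conj_sign k *\<^sub>R ev k"
  by (simp add: oconj_basis_def conj_sign_def)

lemma oconj_basis_anticomm:
  assumes k: "k < 8" and l: "l < 8"
  shows "omult (oconj_basis k) (omult (ev l) c) + omult (oconj_basis l) (omult (ev k) c)
         = (if k = l then 2 else 0) *\<^sub>R c"
proof -
  have basis: "omult (oconj_basis k) (omult (ev l) (ev j)) + omult (oconj_basis l) (omult (ev k) (ev j))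
       = (if k = l then 2 else 0) *\<^sub>R ev j" if j: "j < 8" for j
  proof -
    have prod: "omult (oconj_basis a) (omult (ev b) (ev j))
        = (conj_sign a * oct_sign b j * oct_sign a (xor b j)) *\<^sub>R ev (xor a (xor b j))"
      if "a < 8" "b < 8" for a b
      using that j xor_less_8[OF that(2) j]
      by (simp add: oconj_basis_eq omult.scaleR_left omult.scaleR_right omult_ev_ev ebasis_mult_eq)
    show ?thesis
    proof (cases "k = l")
      case True
      then show ?thesis
        using prod[OF k k] oct_sign_square[OF k j] by (simp add: scaleR_2 xor.assoc[symmetric])
    next
      case False
      have "xor k (xor l j) = xor l (xor k j)"
        by (simp add: ac_simps)
      then show ?thesis
        using prod[OF k l] prod[OF l k] oct_sign_anticomm[OF k l j False] False
        by (simp add: scaleR_add_left[symmetric])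
    qed
  qed
  have "omult (oconj_basis k) (omult (ev l) c) + omult (oconj_basis l) (omult (ev k) c)
     = (\<Sum>j<8. comp c j *\<^sub>R (omult (oconj_basis k) (omult (ev l) (ev j))
                               + omult (oconj_basis l) (omult (ev k) (ev j))))"
    by (subst (1 2) oct_expansion[of c])
       (simp add: omult.sum_right omult.scaleR_right sum.distrib scaleR_add_right)
  also have "\<dots> = (if k = l then 2 else 0) *\<^sub>R (\<Sum>j<8. comp c j *\<^sub>R ev j)"
    by (simp add: basis scaleR_sum_right mult.commute)
  finally show ?thesis
    by (simp only: oct_expansion[symmetric])
qed

lemma oct_conj_symbol_mult_symbol:
  "(\<Sum>l<8. omult (s l *\<^sub>R (\<Sum>k<8. s k *\<^sub>R oconj_basis k)) (omult (ev l) c))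
   = (\<Sum>l<8. (s l)\<^sup>2) *\<^sub>R c"
proof -
  define T where "T k l = omult (oconj_basis k) (omult (ev l) c)" for k l
  define X where "X = (\<Sum>l<8::nat. \<Sum>k<8::nat. (s l * s k) *\<^sub>R T k l)"
  have lhs: "(\<Sum>l<8. omult (s l *\<^sub>R (\<Sum>k<8. s k *\<^sub>R oconj_basis k)) (omult (ev l) c)) = X"
    unfolding X_def T_def by (simp add: omult.scaleR_left omult.sum_left scaleR_sum_right)
  have "X = (\<Sum>l<8::nat. \<Sum>k<8::nat. (s l * s k) *\<^sub>R T l k)"
    unfolding X_def by (subst sum.swap) (simp add: mult.commute)
  then have "X + X = X + (\<Sum>l<8::nat. \<Sum>k<8::nat. (s l * s k) *\<^sub>R T l k)"
    by simp
  also have "\<dots> = (\<Sum>l<8::nat. \<Sum>k<8::nat. (s l * s k) *\<^sub>R (T k l + T l k))"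
    unfolding X_def by (simp add: sum.distrib scaleR_add_right)
  also have "\<dots> = (\<Sum>l<8::nat. \<Sum>k<8::nat. if k = l then (2 * (s l)\<^sup>2) *\<^sub>R c else 0)"
    by (intro sum.cong refl) (auto simp: T_def oconj_basis_anticomm power2_eq_square)
  also have "\<dots> = (\<Sum>l<8. (s l)\<^sup>2) *\<^sub>R c + (\<Sum>l<8. (s l)\<^sup>2) *\<^sub>R c"
    by (simp add: scaleR_sum_left[symmetric] sum_distrib_left[symmetric] scaleR_2[symmetric])
  finally show ?thesis
    using lhs by (metis scaleR_2 scaleR_left_imp_eq zero_neq_numeral)
qed

section \<open>Integrals over the period cube\<close>

definition period_cube :: "(real ^ 'n) set" where
  "period_cube = cbox (\<chi> i. - pi) (\<chi> i. pi)"

definition slab :: "'n \<Rightarrow> real \<Rightarrow> real \<Rightarrow> (real ^ 'n) set" where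
  "slab m p q = cbox (\<chi> i. if i = m then p else - pi) (\<chi> i. if i = m then q else pi)"

lemma mem_slab:
  "x \<in> slab m p q \<longleftrightarrow> p \<le> x $ m \<and> x $ m \<le> q \<and> (\<forall>i. i \<noteq> m \<longrightarrow> - pi \<le> x $ i \<and> x $ i \<le> pi)"
  unfolding slab_def mem_box_cart by (simp; blast)

lemma period_cube_eq_slab: "period_cube = slab m (- pi) pi"
  unfolding period_cube_def slab_def by (intro arg_cong2[where f=cbox]) (auto simp: vec_eq_iff)

lemma has_integral_slab_split:
  fixes g :: "real ^ 'n \<Rightarrow> 'a::real_normed_vector"
  assumes "(g has_integral I) (slab m p r)" "(g has_integral J) (slab m r q)" "p \<le> r" "r \<le> q"
  shows "(g has_integral I + J) (slab m p q)"
proof -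
  have "slab m p q \<inter> {x. x \<bullet> axis m 1 \<le> r} = slab m p r"
    and "slab m p q \<inter> {x. r \<le> x \<bullet> axis m 1} = slab m r q"
    using assms(3,4) by (auto simp: mem_slab inner_axis)
  moreover have "axis m (1::real) \<in> Basis"
    by simp
  ultimately show ?thesis
    using assms(1,2) has_integral_split[of g I _ _ "axis m 1" r J]
    unfolding slab_def by simp
qed

lemma has_integral_slab_shift:
  fixes g :: "real ^ 'n \<Rightarrow> 'a::real_normed_vector"
  shows "((\<lambda>x. g (x + d *\<^sub>R axis m 1)) has_integral I) (slab m (p - d) (q - d))
     \<longleftrightarrow> (g has_integral I) (slab m p q)"
proof -
  have "((\<lambda>x. g (x + d *\<^sub>R axis m 1)) has_integral I) (cbox (a - d *\<^sub>R axis m 1) (b - d *\<^sub>R axis m 1))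
     \<longleftrightarrow> (g has_integral I) (cbox a b)" for a b
    using has_integral_affinity_iff[of 1 g "d *\<^sub>R axis m 1" I a b] by (simp add: add.commute)
  moreover have "(\<chi> i. if i = m then p else - pi) - d *\<^sub>R axis m 1 = (\<chi> i. if i = m then p - d else - pi)"
    and "(\<chi> i. if i = m then q else pi) - d *\<^sub>R axis m 1 = (\<chi> i. if i = m then q - d else pi)"
    by (auto simp: vec_eq_iff axis_def)
  ultimately show ?thesis
    unfolding slab_def by metis
qed

lemma integral_period_cube_shift:
  fixes g :: "real ^ 'n \<Rightarrow> real"
  assumes cont: "continuous_on UNIV g"
    and periodic: "\<And>u. g (u + (2 * pi) *\<^sub>R axis m 1) = g u"
    and t: "0 \<le> t" "t \<le> 2 * pi"
  shows "integral period_cube (\<lambda>u. g (u + t *\<^sub>R axis m 1)) = integral period_cube g"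
proof -
  have integrable: "g integrable_on slab m p q" for p q
    unfolding slab_def by (rule integrable_continuous) (rule continuous_on_subset[OF cont], simp)
  define I1 where "I1 = integral (slab m (- pi) (t - pi)) g"
  define I2 where "I2 = integral (slab m (t - pi) pi) g"
  have low: "(g has_integral I1) (slab m (- pi) (t - pi))"
    and high: "(g has_integral I2) (slab m (t - pi) pi)"
    unfolding I1_def I2_def using integrable by blast+
  have "(g has_integral I1 + I2) period_cube"
    unfolding period_cube_eq_slab[of m] using has_integral_slab_split[OF low high] t by simp
  moreover have "(g has_integral I1) (slab m pi (pi + t))"
    using has_integral_slab_shift[of g "2 * pi" m I1 pi "pi + t"] low by (simp add: periodic)
  then have "(g has_integral I2 + I1) (slab m (t - pi) (pi + t))"
    using has_integral_slab_split[OF high] t by simp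
  then have "((\<lambda>u. g (u + t *\<^sub>R axis m 1)) has_integral I2 + I1) period_cube"
    using has_integral_slab_shift[of g t m "I2 + I1" "t - pi" "pi + t"]
    by (simp add: period_cube_eq_slab[of m])
  ultimately show ?thesis
    by (simp add: integral_unique add.commute)
qed

lemma content_period_cube: "Henstock_Kurzweil_Integration.content (period_cube :: (real ^ 'n) set) = (2 * pi) ^ CARD('n)"
proof -
  have "0 \<in> (period_cube :: (real ^ 'n) set)"
    by (simp add: period_cube_def mem_box_cart)
  then have "Henstock_Kurzweil_Integration.content (period_cube :: (real ^ 'n) set) = (\<Prod>i::'n\<in>UNIV. 2 * pi)"
    unfolding period_cube_def by (subst content_cbox_cart) auto
  then show ?thesis
    by simp
qed

lemma integral_period_cube_cos_inner:
  fixes z :: "real ^ 'n"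
  assumes z: "\<forall>i. z $ i \<in> \<int>"
  shows "integral period_cube (\<lambda>u. cos (u \<bullet> z)) = (if z = 0 then (2 * pi) ^ CARD('n) else 0)"
proof (cases "z = 0")
  case True
  then show ?thesis
    by (simp add: period_cube_def content_period_cube[unfolded period_cube_def])
next
  case False
  then obtain m where "z $ m \<noteq> 0"
    by (auto simp: vec_eq_iff)
  moreover obtain k where k: "z $ m = of_int k"
    using z by (meson Ints_cases)
  ultimately have "k \<noteq> 0"
    by simp
  define t where "t = pi / \<bar>of_int k\<bar>"
  define g where "g u = cos (u \<bullet> z)" for u :: "real ^ 'n"
  have shift: "(u + r *\<^sub>R axis m 1) \<bullet> z = u \<bullet> z + r * of_int k" for u r
    by (simp add: inner_add_left inner_axis' k)
  have cont: "continuous_on UNIV g"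
    unfolding g_def by (intro continuous_intros)
  have periodic: "g (u + (2 * pi) *\<^sub>R axis m 1) = g u" for u
    unfolding g_def shift using cos_int_2pin sin_int_2pin by (simp add: cos_add mult.assoc)
  have antiperiodic: "g (u + t *\<^sub>R axis m 1) = - g u" for u
  proof -
    have "t * of_int k = (if k > 0 then pi else - pi)"
      unfolding t_def using \<open>k \<noteq> 0\<close> by (auto simp: abs_if)
    then show ?thesis
      unfolding g_def shift by (auto simp: cos_add)
  qed
  have "0 \<le> t" "t \<le> 2 * pi"
    using \<open>k \<noteq> 0\<close> pi_gt_zero by (simp_all add: t_def divide_le_eq)
  then have "integral period_cube g = integral period_cube (\<lambda>u. - g u)"
    using integral_period_cube_shift[OF cont periodic, of t] by (simp add: antiperiodic)
  then show ?thesis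
    using False unfolding g_def by (simp add: integral_neg)
qed

section \<open>The fundamental solution\<close>

lemma abs_sin_add_le: "\<bar>sin (a + b)\<bar> \<le> \<bar>sin a\<bar> + \<bar>sin (b::real)\<bar>"
proof -
  have "\<bar>sin (a + b)\<bar> \<le> \<bar>sin a * cos b\<bar> + \<bar>cos a * sin b\<bar>"
    unfolding sin_add by (rule abs_triangle_ineq)
  also have "\<dots> \<le> \<bar>sin a\<bar> + \<bar>sin b\<bar>"
    by (intro add_mono) (simp_all add: abs_mult mult_left_le mult_left_le_one_le)
  finally show ?thesis .
qed

lemma abs_sin_sum_le: "\<bar>sin (\<Sum>i\<in>A. f i :: real)\<bar> \<le> (\<Sum>i\<in>A. \<bar>sin (f i)\<bar>)"
proof (induction A rule: infinite_finite_induct)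
  case (insert a A)
  then show ?case
    using abs_sin_add_le[of "f a" "sum f A"] by simp
qed simp_all

lemma abs_sin_of_nat_mult_le: "\<bar>sin (real n * x)\<bar> \<le> real n * \<bar>sin (x::real)\<bar>"
  using abs_sin_sum_le[of "\<lambda>_. x" "{..<n}"] by simp

lemma abs_sin_of_int_mult_le: "\<bar>sin (of_int k * x)\<bar> \<le> \<bar>of_int k\<bar> * \<bar>sin (x::real)\<bar>"
  using abs_sin_of_nat_mult_le[of "nat \<bar>k\<bar>" x] by (cases "k \<ge> 0") auto

definition sin_sq_sum :: "real ^ 8 \<Rightarrow> real" where
  "sin_sq_sum u = (\<Sum>l<8. (sin (comp u l))\<^sup>2)"

definition conj_symbol :: "real ^ 8 \<Rightarrow> oct" where
  "conj_symbol u = (\<Sum>l<8. sin (comp u l) *\<^sub>R oconj_basis l)"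

definition E1_integrand :: "real ^ 8 \<Rightarrow> real ^ 8 \<Rightarrow> oct" where
  "E1_integrand x u = (sin (u \<bullet> x) / sin_sq_sum u) *\<^sub>R conj_symbol u"

lemma E1_eq_integral: "E1 x = (1 / (2 * pi) ^ 8) *\<^sub>R integral period_cube (E1_integrand x)"
  unfolding E1_def period_cube_def E1_integrand_def sin_sq_sum_def conj_symbol_def by simp

lemma sin_sq_sum_nonneg: "sin_sq_sum u \<ge> 0"
  unfolding sin_sq_sum_def by (simp add: sum_nonneg)

lemma abs_sin_component_le: "\<bar>sin (u $ i)\<bar> \<le> sqrt (sin_sq_sum u)"
proof -
  obtain l where l: "l < 8" "i = of_nat l"
    using ex_of_nat_8 by blast
  have "(sin (comp u l))\<^sup>2 \<le> sin_sq_sum u"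
    unfolding sin_sq_sum_def by (rule member_le_sum) (use l in auto)
  then show ?thesis
    using l real_sqrt_le_mono by (fastforce simp: comp_def)
qed

lemma abs_sin_inner_int_le:
  assumes "\<forall>i. w $ i \<in> \<int>"
  shows "\<bar>sin (u \<bullet> w)\<bar> \<le> (\<Sum>i\<in>UNIV. \<bar>w $ i\<bar>) * sqrt (sin_sq_sum u)"
proof -
  have "\<bar>sin (u \<bullet> w)\<bar> \<le> (\<Sum>i\<in>UNIV. \<bar>sin (w $ i * u $ i)\<bar>)"
    unfolding inner_vec_def using abs_sin_sum_le by (simp add: mult.commute)
  also have "\<dots> \<le> (\<Sum>i\<in>UNIV. \<bar>w $ i\<bar> * sqrt (sin_sq_sum u))"
  proof (rule sum_mono)
    fix i
    obtain k where k: "w $ i = of_int k"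
      using assms by (meson Ints_cases)
    show "\<bar>sin (w $ i * u $ i)\<bar> \<le> \<bar>w $ i\<bar> * sqrt (sin_sq_sum u)"
      using abs_sin_of_int_mult_le[of k "u $ i"] abs_sin_component_le[of u i]
      by (simp add: k) (meson abs_ge_zero mult_left_mono order_trans)
  qed
  finally show ?thesis
    by (simp add: sum_distrib_right)
qed

lemma norm_oconj_basis: "norm (oconj_basis l) = 1"
  by (simp add: oconj_basis_def ev_def)

lemma norm_conj_symbol_le: "norm (conj_symbol u) \<le> 8 * sqrt (sin_sq_sum u)"
proof -
  have "norm (conj_symbol u) \<le> (\<Sum>l<8. \<bar>sin (comp u l)\<bar>)"
    unfolding conj_symbol_def using norm_sum[of "\<lambda>l. sin (comp u l) *\<^sub>R oconj_basis l" "{..<8}"]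
    by (simp add: norm_oconj_basis)
  also have "\<dots> \<le> (\<Sum>l<(8::nat). sqrt (sin_sq_sum u))"
    unfolding comp_def by (intro sum_mono abs_sin_component_le)
  finally show ?thesis
    by simp
qed

lemma norm_E1_integrand_le:
  assumes "\<forall>i. w $ i \<in> \<int>"
  shows "norm (E1_integrand w u) \<le> 8 * (\<Sum>i\<in>UNIV. \<bar>w $ i\<bar>)"
proof (cases "sin_sq_sum u = 0")
  case False
  then have pos: "sin_sq_sum u > 0"
    using sin_sq_sum_nonneg[of u] by simp
  have "norm (E1_integrand w u) = \<bar>sin (u \<bullet> w)\<bar> / sin_sq_sum u * norm (conj_symbol u)"
    by (simp add: E1_integrand_def abs_of_nonneg[OF sin_sq_sum_nonneg])
  also have "\<dots> \<le> ((\<Sum>i\<in>UNIV. \<bar>w $ i\<bar>) * sqrt (sin_sq_sum u)) / sin_sq_sum u * (8 * sqrt (sin_sq_sum u))"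
    using abs_sin_inner_int_le[OF assms, of u] norm_conj_symbol_le[of u] pos
    by (intro mult_mono divide_right_mono) (auto simp: sum_nonneg)
  also have "\<dots> = 8 * (\<Sum>i\<in>UNIV. \<bar>w $ i\<bar>)"
    using pos by (simp add: field_simps)
  finally show ?thesis .
qed (simp add: E1_integrand_def sum_nonneg)

lemma E1_integrand_measurable: "E1_integrand w \<in> borel_measurable borel"
proof -
  have comp: "continuous_on UNIV (\<lambda>u::real ^ 8. comp u l)" for l
    unfolding comp_def by (intro continuous_intros)
  have "(\<lambda>u::real ^ 8. sin (u \<bullet> w)) \<in> borel_measurable borel"
    by (intro borel_measurable_continuous_onI continuous_intros)
  moreover have "sin_sq_sum \<in> borel_measurable borel"
    unfolding sin_sq_sum_def
    by (intro borel_measurable_continuous_onI continuous_intros continuous_on_compose2[OF _ comp]) auto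
  moreover have "conj_symbol \<in> borel_measurable borel"
    unfolding conj_symbol_def
    by (intro borel_measurable_continuous_onI continuous_intros continuous_on_compose2[OF _ comp]) auto
  ultimately show ?thesis
    unfolding E1_integrand_def by measurable
qed

lemma E1_integrand_integrable:
  assumes "\<forall>i. w $ i \<in> \<int>"
  shows "E1_integrand w integrable_on period_cube"
proof (rule measurable_bounded_by_integrable_imp_integrable)
  show "E1_integrand w \<in> borel_measurable (lebesgue_on period_cube)"
    using E1_integrand_measurable
    by (intro measurable_restrict_space1 measurable_completion) simp
  show "(\<lambda>_. 8 * (\<Sum>i\<in>UNIV. \<bar>w $ i\<bar>)) integrable_on period_cube"
    unfolding period_cube_def by (intro integrable_continuous continuous_on_const)
qed (use norm_E1_integrand_le[OF assms] in \<open>auto simp: period_cube_def\<close>)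

lemma negligible_sin_zero: "negligible {u \<in> period_cube. sin (comp u 0) = 0}"
proof (rule negligible_subset)
  show "{u \<in> period_cube. sin (comp u 0) = 0}
        \<subseteq> (\<Union>c\<in>{- pi, 0, pi}. {x. x \<bullet> axis 0 1 = c})"
  proof clarify
    fix u :: "real ^ 8"
    assume "u \<in> period_cube" "sin (comp u 0) = 0"
    then have "- pi \<le> u $ 0" "u $ 0 \<le> pi"
      by (simp_all add: period_cube_def mem_box_cart)
    moreover obtain i :: int where "u $ 0 = of_int i * pi"
      using \<open>sin (comp u 0) = 0\<close> by (auto simp: comp_def sin_zero_iff_int2)
    ultimately have i: "u $ 0 = of_int i * pi" "- pi \<le> of_int i * pi" "of_int i * pi \<le> pi"
      by simp_all
    then have "0 \<le> (of_int i + 1) * pi" "0 \<le> (1 - of_int i) * pi"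
      by (simp_all add: algebra_simps)
    then have "- 1 \<le> i \<and> i \<le> 1"
      using pi_gt_zero by (simp add: zero_le_mult_iff)
    then have "i = - 1 \<or> i = 0 \<or> i = 1"
      by linarith
    then have "u $ 0 \<in> {- pi, 0, pi}"
      using i by auto
    then show "u \<in> (\<Union>c\<in>{- pi, 0, pi}. {x. x \<bullet> axis 0 1 = c})"
      by (auto simp: inner_axis)
  qed
qed auto

lemma sum_E1_integrand_differences:
  assumes "sin_sq_sum u \<noteq> 0"
  shows "(\<Sum>l<8. omult (E1_integrand (z + ev l) u - E1_integrand (z - ev l) u) (omult (ev l) c))
       = cos (u \<bullet> z) *\<^sub>R (2 *\<^sub>R c)"
proof -
  define r where "r = 2 * cos (u \<bullet> z) / sin_sq_sum u"
  have "E1_integrand (z + ev l) u - E1_integrand (z - ev l) u = (r * sin (comp u l)) *\<^sub>R conj_symbol u" for l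
  proof -
    have "sin (u \<bullet> z + comp u l) - sin (u \<bullet> z - comp u l) = 2 * cos (u \<bullet> z) * sin (comp u l)"
      by (simp add: sin_add sin_diff)
    then show ?thesis
      unfolding E1_integrand_def r_def
      by (simp add: inner_add_right inner_diff_right inner_ev scaleR_diff_left[symmetric]
          diff_divide_distrib[symmetric])
  qed
  then have "(\<Sum>l<8. omult (E1_integrand (z + ev l) u - E1_integrand (z - ev l) u) (omult (ev l) c))
      = r *\<^sub>R (\<Sum>l<8. omult (sin (comp u l) *\<^sub>R conj_symbol u) (omult (ev l) c))"
    by (simp add: omult.scaleR_left scaleR_sum_right)
  also have "\<dots> = r *\<^sub>R (sin_sq_sum u *\<^sub>R c)"
    unfolding conj_symbol_def sin_sq_sum_def by (subst oct_conj_symbol_mult_symbol) simp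
  also have "\<dots> = cos (u \<bullet> z) *\<^sub>R (2 *\<^sub>R c)"
    using assms by (simp add: r_def)
  finally show ?thesis .
qed

lemma E1_discrete_dirac:
  assumes z: "\<forall>i. z $ i \<in> \<int>"
  shows "(\<Sum>l<8. omult (E1 (z + ev l) - E1 (z - ev l)) (omult (ev l) c)) = (if z = 0 then 2 else 0) *\<^sub>R c"
proof -
  define G where "G l u = E1_integrand (z + ev l) u - E1_integrand (z - ev l) u" for l u
  have integer_shift: "\<forall>i. (z + ev l) $ i \<in> \<int>" "\<forall>i. (z - ev l) $ i \<in> \<int>" for l
    using z by (auto simp: ev_def axis_def)
  have G_integrable: "G l integrable_on period_cube" for l
    unfolding G_def by (intro integrable_diff E1_integrand_integrable integer_shift)
  have "E1 (z + ev l) - E1 (z - ev l) = (1 / (2 * pi) ^ 8) *\<^sub>R integral period_cube (G l)" for l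
    unfolding E1_eq_integral G_def
    by (simp add: integral_diff[OF E1_integrand_integrable[OF integer_shift(1)]
          E1_integrand_integrable[OF integer_shift(2)]] scaleR_diff_right)
  moreover have "omult (integral period_cube (G l)) d = integral period_cube (\<lambda>u. omult (G l u) d)" for l d
    using integral_linear[OF G_integrable omult.bounded_linear_left] by (simp add: o_def)
  ultimately have "(\<Sum>l<8. omult (E1 (z + ev l) - E1 (z - ev l)) (omult (ev l) c))
        = (1 / (2 * pi) ^ 8) *\<^sub>R integral period_cube (\<lambda>u. \<Sum>l<8. omult (G l u) (omult (ev l) c))"
    using integrable_linear[OF G_integrable omult.bounded_linear_left]
    by (simp add: omult.scaleR_left scaleR_sum_right integral_sum o_def)
  also have "integral period_cube (\<lambda>u. \<Sum>l<8. omult (G l u) (omult (ev l) c))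
           = integral period_cube (\<lambda>u. cos (u \<bullet> z) *\<^sub>R (2 *\<^sub>R c))"
  proof (rule integral_spike[OF negligible_sin_zero])
    fix u
    assume "u \<in> period_cube - {u \<in> period_cube. sin (comp u 0) = 0}"
    then have "0 < (sin (comp u 0))\<^sup>2"
      by simp
    also have "\<dots> \<le> sin_sq_sum u"
      unfolding sin_sq_sum_def by (rule member_le_sum) auto
    finally show "cos (u \<bullet> z) *\<^sub>R (2 *\<^sub>R c) = (\<Sum>l<8. omult (G l u) (omult (ev l) c))"
      unfolding G_def using sum_E1_integrand_differences by simp
  qed
  also have "\<dots> = integral period_cube (\<lambda>u. cos (u \<bullet> z)) *\<^sub>R (2 *\<^sub>R c)"
  proof -
    have "(\<lambda>u. cos (u \<bullet> z)) integrable_on period_cube"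
      unfolding period_cube_def by (intro integrable_continuous continuous_intros)
    then show ?thesis
      by (intro integral_unique has_integral_scaleR_left integrable_integral)
  qed
  finally show ?thesis
    using integral_period_cube_cos_inner[OF z] by simp
qed

section \<open>Summation by parts on the lattice\<close>

lemma lattice_add:
  assumes "x \<in> lattice h" "y \<in> lattice h"
  shows "x + y \<in> lattice h"
proof -
  have "\<exists>k::int. (x + y) $ i = h * of_int k" for i
  proof -
    obtain a b :: int where "x $ i = h * of_int a" "y $ i = h * of_int b"
      using assms unfolding lattice_def by blast
    then show ?thesis
      by (intro exI[of _ "a + b"]) (simp add: algebra_simps)
  qed
  then show ?thesis
    by (simp add: lattice_def)
qed

lemma lattice_uminus: "x \<in> lattice h \<Longrightarrow> - x \<in> lattice h"
  unfolding lattice_def by simp (metis mult_minus_right of_int_minus)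

lemma lattice_diff: "x \<in> lattice h \<Longrightarrow> y \<in> lattice h \<Longrightarrow> x - y \<in> lattice h"
  using lattice_add lattice_uminus by fastforce

lemma scaled_ev_in_lattice: "h *\<^sub>R ev l \<in> lattice h"
  unfolding lattice_def ev_def axis_def by (auto intro: exI[of _ 1] exI[of _ 0])

lemma lattice_difference_integer:
  assumes "h > 0" "x \<in> lattice h" "y \<in> lattice h"
  shows "\<forall>i. ((1 / h) *\<^sub>R (y - x)) $ i \<in> \<int>"
proof
  fix i
  obtain k where "(y - x) $ i = h * of_int k"
    using lattice_diff[OF assms(3,2)] unfolding lattice_def by blast
  then show "((1 / h) *\<^sub>R (y - x)) $ i \<in> \<int>"
    using assms(1) by simp
qed

lemma nbhd_subset_lattice: "x \<in> lattice h \<Longrightarrow> nbhd h x \<subseteq> lattice h"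
  unfolding nbhd_def using lattice_add lattice_diff scaled_ev_in_lattice by auto

lemma nbhd_sym: "y \<in> nbhd h x \<Longrightarrow> x \<in> nbhd h y"
  unfolding nbhd_def by (auto simp: algebra_simps)

lemma finite_bounded_lattice_subset:
  assumes h: "h > 0" and B: "B \<subseteq> lattice h" and "bounded B"
  shows "finite B"
proof -
  obtain R where R: "\<And>x. x \<in> B \<Longrightarrow> norm x \<le> R"
    using \<open>bounded B\<close> unfolding bounded_iff by blast
  define N where "N = ceiling (R / h)"
  have "B \<subseteq> (\<lambda>k. \<chi> i. h * of_int (k i)) ` (UNIV \<rightarrow> {-N..N})"
  proof
    fix x
    assume x: "x \<in> B"
    then have "\<forall>i. \<exists>k::int. x $ i = h * of_int k"
      using B unfolding lattice_def by blast
    then obtain k where k: "\<And>i. x $ i = h * of_int (k i)"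
      by metis
    have "k i \<in> {-N..N}" for i
    proof -
      have "\<bar>h * of_int (k i)\<bar> \<le> R"
        using k[of i] R[OF x] component_le_norm_cart[of x i] by simp
      then have "of_int \<bar>k i\<bar> \<le> R / h"
        using h by (simp add: abs_mult field_simps)
      then have "\<bar>k i\<bar> \<le> N"
        unfolding N_def by (meson le_of_int_ceiling of_int_le_iff order_trans)
      then show ?thesis
        by (simp add: abs_le_iff)
    qed
    moreover have "x = (\<chi> i. h * of_int (k i))"
      by (simp add: vec_eq_iff k)
    ultimately show "x \<in> (\<lambda>k. \<chi> i. h * of_int (k i)) ` (UNIV \<rightarrow> {-N..N})"
      by blast
  qed
  moreover have "finite (UNIV \<rightarrow> {-N..N} :: (8 \<Rightarrow> int) set)"
    using finite_PiE[of "UNIV :: 8 set" "\<lambda>_. {-N..N}"] by (simp add: PiE_UNIV_domain)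
  ultimately show ?thesis
    using finite_subset by blast
qed

lemma finite_bd: "finite B \<Longrightarrow> finite (bd h B)"
proof -
  assume "finite B"
  then have "finite (\<Union>b\<in>B. nbhd h b)"
    by (simp add: nbhd_def)
  moreover have "bd h B \<subseteq> (\<Union>b\<in>B. nbhd h b)"
    unfolding bd_def using nbhd_sym by blast
  ultimately show ?thesis
    using finite_subset by blast
qed

lemma chi_differences_vanish_off_bd:
  assumes "x \<in> lattice h" "x \<notin> bd h B" "l < 8"
  shows "dminus h l (chi B) x = 0" "dplus h l (chi B) x = 0"
proof -
  have "nbhd h x \<inter> B = {} \<or> nbhd h x \<subseteq> B"
    using assms(1,2) nbhd_subset_lattice[OF assms(1)] unfolding bd_def by blast
  moreover have "{x, x + h *\<^sub>R ev l, x - h *\<^sub>R ev l} \<subseteq> nbhd h x"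
    using assms(3) unfolding nbhd_def by auto
  ultimately show "dminus h l (chi B) x = 0" "dplus h l (chi B) x = 0"
    by (auto simp: dminus_def dplus_def chi_def)
qed

lemma Sig_pos:
  assumes "h > 0" "x \<in> bd h B"
  shows "Sig h B x > 0"
proof (rule ccontr)
  assume "\<not> Sig h B x > 0"
  then have "Sig h B x = 0"
    using sum_nonneg[of "{..<8}" "\<lambda>l. (dplus h l (chi B) x)\<^sup>2 + (dminus h l (chi B) x)\<^sup>2"]
    by (simp add: Sig_def)
  then have "dplus h l (chi B) x = 0 \<and> dminus h l (chi B) x = 0" if "l < 8" for l
    using that unfolding Sig_def by (subst (asm) sum_nonneg_eq_0_iff) auto
  then have const: "chi B w = chi B x" if "w \<in> nbhd h x" for w
    using that assms(1) unfolding nbhd_def by (auto simp: dplus_def dminus_def)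
  from assms(2) obtain b n where "b \<in> nbhd h x" "b \<in> B" "n \<in> nbhd h x" "n \<notin> B"
    unfolding bd_def by blast
  then show False
    using const[of b] const[of n] by (simp add: chi_def)
qed

lemma sfac_mult_normal:
  assumes "h > 0" "x \<in> bd h B"
  shows "sfac h B x * nminus h B l x = - (h ^ 8) * dminus h l (chi B) x"
    and "sfac h B x * nplus h B l x = - (h ^ 8) * dplus h l (chi B) x"
  using Sig_pos[OF assms] by (simp_all add: sfac_def nminus_def nplus_def field_simps)

lemma sum_chi_scaleR:
  fixes f :: "_ \<Rightarrow> 'a::real_vector"
  assumes "finite T" "A \<subseteq> T"
  shows "(\<Sum>x\<in>T. chi A x *\<^sub>R f x) = (\<Sum>x\<in>A. f x)"
proof -
  have "(\<Sum>x\<in>T. chi A x *\<^sub>R f x) = (\<Sum>x\<in>T. if x \<in> A then f x else 0)"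
    by (rule sum.cong) (auto simp: chi_def)
  then show ?thesis
    using assms by (simp add: sum.inter_restrict[symmetric] Int_absorb1)
qed

text \<open>The hypothesis \<open>shift\<close> is what makes the two translated sums over \<open>B\<close> cancel.\<close>
lemma boundary_sum_by_parts:
  fixes P M :: "real ^ 8 \<Rightarrow> oct"
  assumes h: "h > 0" and B: "B \<subseteq> lattice h" "finite B" and l: "l < 8"
    and shift: "\<And>b. P (b + h *\<^sub>R ev l) = M (b - h *\<^sub>R ev l)"
  shows "(\<Sum>x\<in>bd h B. dminus h l (chi B) x *\<^sub>R P x + dplus h l (chi B) x *\<^sub>R M x)
       = (1 / h) *\<^sub>R (\<Sum>b\<in>B. P b - M b)"
proof -
  define v where "v = h *\<^sub>R ev l"
  define T where "T = bd h B \<union> B \<union> (\<lambda>b. b + v) ` B \<union> (\<lambda>b. b - v) ` B"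
  have T: "finite T" "T \<subseteq> lattice h"
    using B finite_bd[OF B(2)] lattice_add lattice_diff scaled_ev_in_lattice
    unfolding T_def v_def bd_def by auto
  have "x \<in> (\<lambda>b. b + v) ` B \<longleftrightarrow> x - v \<in> B" "x \<in> (\<lambda>b. b - v) ` B \<longleftrightarrow> x + v \<in> B" for x
    by (force simp: algebra_simps)+
  then have chi_shift: "chi B (x - v) = chi ((\<lambda>b. b + v) ` B) x" "chi B (x + v) = chi ((\<lambda>b. b - v) ` B) x" for x
    by (simp_all add: chi_def)
  have "(\<Sum>x\<in>bd h B. dminus h l (chi B) x *\<^sub>R P x + dplus h l (chi B) x *\<^sub>R M x)
      = (\<Sum>x\<in>T. dminus h l (chi B) x *\<^sub>R P x + dplus h l (chi B) x *\<^sub>R M x)"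
    using T chi_differences_vanish_off_bd[OF _ _ l]
    by (intro sum.mono_neutral_left) (auto simp: T_def)
  also have "\<dots> = (1 / h) *\<^sub>R ((\<Sum>x\<in>T. chi B x *\<^sub>R P x) - (\<Sum>x\<in>T. chi B (x - v) *\<^sub>R P x)
                + (\<Sum>x\<in>T. chi B (x + v) *\<^sub>R M x) - (\<Sum>x\<in>T. chi B x *\<^sub>R M x))"
    unfolding dminus_def dplus_def v_def
    by (simp add: scaleR_sum_right sum_subtractf[symmetric] sum.distrib[symmetric] algebra_simps
        scaleR_diff_left scaleR_diff_right divide_inverse)
  also have "\<dots> = (1 / h) *\<^sub>R ((\<Sum>b\<in>B. P b) - (\<Sum>b\<in>B. P (b + v)) + (\<Sum>b\<in>B. M (b - v)) - (\<Sum>b\<in>B. M b))"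
  proof -
    have "B \<subseteq> T" "(\<lambda>b. b + v) ` B \<subseteq> T" "(\<lambda>b. b - v) ` B \<subseteq> T"
      by (auto simp: T_def)
    then show ?thesis
      unfolding chi_shift by (simp add: sum_chi_scaleR[OF T(1)] sum.reindex inj_on_def)
  qed
  also have "\<dots> = (1 / h) *\<^sub>R (\<Sum>b\<in>B. P b - M b)"
    by (simp add: shift v_def sum_subtractf)
  finally show ?thesis .
qed

lemma sfac_scaleR_star:
  assumes "h > 0" "x \<in> bd h B"
  shows "sfac h B x *\<^sub>R star h B y g x = (h ^ 8 / 2) *\<^sub>R (\<Sum>l<8.
      dminus h l (chi B) x *\<^sub>R omult (Eh h (h *\<^sub>R ev l - x + y)) (omult (ev l) (g x))
    + dplus h l (chi B) x *\<^sub>R omult (Eh h (- (h *\<^sub>R ev l) - x + y)) (omult (ev l) (g x)))"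
proof -
  have "sfac h B x *\<^sub>R star h B y g x = (\<Sum>l<8.
      (- (1/2) * (sfac h B x * nminus h B l x)) *\<^sub>R omult (Eh h (h *\<^sub>R ev l - x + y)) (omult (ev l) (g x))
    + (- (1/2) * (sfac h B x * nplus h B l x)) *\<^sub>R omult (Eh h (- (h *\<^sub>R ev l) - x + y)) (omult (ev l) (g x)))"
    unfolding star_def
    by (simp add: scaleR_sum_right omult.add_left omult.scaleR_left algebra_simps)
  then show ?thesis
    by (simp add: sfac_mult_normal[OF assms] scaleR_sum_right scaleR_add_right)
qed

lemma Eh_discrete_dirac:
  assumes h: "h > 0" and "b \<in> lattice h" "y \<in> lattice h"
  shows "(\<Sum>l<8. omult (Eh h (h *\<^sub>R ev l - b + y) - Eh h (- (h *\<^sub>R ev l) - b + y)) (omult (ev l) c))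
       = (if b = y then (2 / h ^ 7) *\<^sub>R c else 0)"
proof -
  define z where "z = (1 / h) *\<^sub>R (y - b)"
  have "(1 / h) *\<^sub>R (h *\<^sub>R ev l - b + y) = z + ev l" "(1 / h) *\<^sub>R (- (h *\<^sub>R ev l) - b + y) = z - ev l" for l
    using h by (simp_all add: z_def algebra_simps)
  then have "(\<Sum>l<8. omult (Eh h (h *\<^sub>R ev l - b + y) - Eh h (- (h *\<^sub>R ev l) - b + y)) (omult (ev l) c))
      = (1 / h ^ 7) *\<^sub>R (\<Sum>l<8. omult (E1 (z + ev l) - E1 (z - ev l)) (omult (ev l) c))"
    unfolding Eh_def by (simp add: scaleR_sum_right omult.scaleR_left omult.diff_left scaleR_diff_right)
  moreover have "\<forall>i. z $ i \<in> \<int>"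
    using lattice_difference_integer[OF assms] unfolding z_def .
  moreover have "z = 0 \<longleftrightarrow> b = y"
    using h by (auto simp: z_def)
  ultimately show ?thesis
    by (simp add: E1_discrete_dirac divide_inverse)
qed

lemma surf_int_star_const:
  assumes h: "h > 0" and B: "B \<subseteq> lattice h" "finite B" and y: "y \<in> lattice h"
  shows "surf_int h B (star h B y (\<lambda>_. c)) = chi B y *\<^sub>R c"
proof -
  define P where "P l x = omult (Eh h (h *\<^sub>R ev l - x + y)) (omult (ev l) c)" for l x
  define M where "M l x = omult (Eh h (- (h *\<^sub>R ev l) - x + y)) (omult (ev l) c)" for l x
  have "surf_int h B (star h B y (\<lambda>_. c))
      = (h ^ 8 / 2) *\<^sub>R (\<Sum>l<8. \<Sum>x\<in>bd h B. dminus h l (chi B) x *\<^sub>R P l x + dplus h l (chi B) x *\<^sub>R M l x)"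
    unfolding surf_int_def P_def M_def scaleR_sum_right
    by (subst sum.swap) (intro sum.cong refl, simp add: sfac_scaleR_star[OF h] scaleR_sum_right)
  also have "\<dots> = (h ^ 8 / 2) *\<^sub>R (\<Sum>l<8. (1 / h) *\<^sub>R (\<Sum>b\<in>B. P l b - M l b))"
  proof -
    have "P l (b + h *\<^sub>R ev l) = M l (b - h *\<^sub>R ev l)" for l b
      unfolding P_def M_def by (simp add: algebra_simps)
    then show ?thesis
      using boundary_sum_by_parts[OF h B] by simp
  qed
  also have "\<dots> = (h ^ 7 / 2) *\<^sub>R (\<Sum>b\<in>B. \<Sum>l<8. P l b - M l b)"
    using h by (simp add: scaleR_sum_right sum.swap[of _ B] power_eq_if)
  also have "\<dots> = (h ^ 7 / 2) *\<^sub>R (\<Sum>b\<in>B. if b = y then (2 / h ^ 7) *\<^sub>R c else 0)"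
  proof -
    have "(\<Sum>l<8. P l b - M l b) = (if b = y then (2 / h ^ 7) *\<^sub>R c else 0)" if "b \<in> B" for b
      unfolding P_def M_def omult.diff_left[symmetric] using Eh_discrete_dirac[OF h _ y] that B(1) by blast
    then show ?thesis
      using sum.cong[OF refl, of B] by simp
  qed
  also have "\<dots> = chi B y *\<^sub>R c"
    using h B(2) by (simp add: chi_def sum.delta')
  finally show ?thesis .
qed

lemma surf_int_star_diff:
  "surf_int h B (star h B y (\<lambda>x. g x - c)) = surf_int h B (star h B y g) - surf_int h B (star h B y (\<lambda>_. c))"
proof -
  have "star h B y (\<lambda>x. g x - c) x = star h B y g x - star h B y (\<lambda>_. c) x" for x
    unfolding star_def by (simp add: omult.diff_right sum_subtractf scaleR_diff_right)
  then show ?thesis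
    unfolding surf_int_def by (simp add: scaleR_diff_right sum_subtractf)
qed

theorem mainTheorem10:
  fixes h :: real and B :: "(real ^ 8) set" and f :: "real ^ 8 \<Rightarrow> real ^ 8"
  assumes "h > 0" and "B \<subseteq> lattice h" and "bounded B"
  shows "(\<forall>y \<in> bd h B \<inter> B. Cop h B f y = (1/2) *\<^sub>R (f y + Sop h B f y))
       \<and> (\<forall>y \<in> bd h B - B. Cop h B f y = (1/2) *\<^sub>R (- f y + Sop h B f y))"
proof -
  have "finite B"
    using finite_bounded_lattice_subset assms by blast
  have Sop: "Sop h B f y = 2 *\<^sub>R Cop h B f y - 2 *\<^sub>R (chi B y *\<^sub>R f y) + f y" if "y \<in> bd h B" for y
  proof -
    have "y \<in> lattice h"
      using that by (simp add: bd_def)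
    then show ?thesis
      unfolding Sop_def Cop_def surf_int_star_diff
      by (simp add: surf_int_star_const[OF assms(1,2) \<open>finite B\<close>] scaleR_diff_right)
  qed
  show ?thesis
    using Sop by (simp add: chi_def scaleR_add_right scaleR_diff_right)
qed

end
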